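(* Let $N\ge 3$, $\Delta\theta^*=2\pi/N$, $P\neq0$, and let $(\theta_k,\omega_k)_{k\ge1}$ be a solution of $$\theta_{k+1}=\theta_k+\Delta\theta^*,\qquad \omega_{k+1}-\omega_k=P\sin\theta_k\left[\frac{1}{\omega_k}+\frac{1}{\omega_{k+1}}\right]\quad(k\ge1)$$ with $\omega_k>0$, $\omega_k^2>|P|$ for all $k$, and $\theta_{k_0}\bmod 2\pi\in\{0,\Delta\theta^*/2\}$ for some $k_0$ (so it is $N$-periodic). Then this periodic orbit is stable but not attractive, in the following sense. Fix an index $k_1$ and $\varepsilon\neq 0$, and let $(\omega'_k)_{k\ge1}$ be a positive sequence with $\omega'_{k_1}=\omega_{k_1}+\varepsilon$ satisfying the same recurrence with the same $(\theta_k)$ and $(\omega'_k)^2>|P|$ for all $k$. Then $(\theta_k,\omega'_k)$ is again $N$-periodic, $\omega'_k\neq\omega_k$ for every $k$ (so the perturbed solution does not converge to the original periodic orbit), and $\sup_k|\omega'_k-\omega_k|\to 0$ as $\varepsilon\to 0$.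
   Context: This is the "discrete zero dynamics" of a devil-stick with $\phi=\pm\pi/2$; in the paper $P=\pm\frac{g(\Delta\theta^* )^2}{2R\sin(\Delta\theta^* )}$ with constants $g,R>0$. The condition $\omega_k^2>|P|$ for all $k$ is the paper's Assumption 1. *)

theory Defs
  imports Complex_Main
begin

definition zd_solution :: "real \<Rightarrow> real \<Rightarrow> (nat \<Rightarrow> real) \<Rightarrow> (nat \<Rightarrow> real) \<Rightarrow> bool" where
  "zd_solution P dth theta omega \<longleftrightarrow>
     (\<forall>k\<ge>1. theta (Suc k) = theta k + dth \<and>
             omega (Suc k) - omega k = P * sin (theta k) * (1 / omega k + 1 / omega (Suc k)))"

definition admissible :: "real \<Rightarrow> (nat \<Rightarrow> real) \<Rightarrow> bool" where
  "admissible P omega \<longleftrightarrow> (\<forall>k\<ge>1. omega k > 0 \<and> (omega k)\<^sup>2 > \<bar>P\<bar>)"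

definition periodic_seq :: "nat \<Rightarrow> (nat \<Rightarrow> real) \<Rightarrow> bool" where
  "periodic_seq N omega \<longleftrightarrow> (\<forall>k\<ge>1. omega (k + N) = omega k)"

end

theory Submission
  imports Defs
begin

text \<open>Writing a = P sin(theta k), the recurrence reads
  w(k+1) - a / w(k+1) = w(k) + a / w(k), and both sides are strictly increasing on
  w > sqrt |P|. Hence the difference of two solutions never changes sign and grows or
  shrinks by at most a bounded factor per step. Reversing time maps a solution to a solution
  of the recurrence with a replaced by -a; the hypothesis on theta(k0) makes sin theta
  antisymmetric about the centres b + jN, and a solution agreeing with its reflection in the
  middle agrees with it everywhere. Two reflections whose centres differ by N yield
  N-periodicity, and periodicity reduces the uniform bound on the perturbation to finitely
  many steps.\<close>

definition zd_step :: "real \<Rightarrow> real \<Rightarrow> real \<Rightarrow> bool" where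
  "zd_step a u x \<longleftrightarrow> x - u = a * (1 / u + 1 / x)"

lemma zd_step_reverse: "zd_step (- a) x u \<longleftrightarrow> zd_step a u x"
  unfolding zd_step_def by (auto simp: algebra_simps)

lemma zd_solution_step:
  "zd_solution P dth theta omega \<Longrightarrow> 1 \<le> k \<Longrightarrow> zd_step (P * sin (theta k)) (omega k) (omega (Suc k))"
  unfolding zd_solution_def zd_step_def by blast

lemma abs_mult_sin_le: "\<bar>P * sin x\<bar> \<le> (sqrt \<bar>P\<bar>)\<^sup>2"
  using abs_sin_le_one[of x] by (simp add: abs_mult mult_left_le)

lemma sqrt_abs_less_iff: "sqrt \<bar>P\<bar> < u \<longleftrightarrow> 0 < u \<and> \<bar>P\<bar> < u\<^sup>2"
proof
  assume "sqrt \<bar>P\<bar> < u"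
  moreover have "0 \<le> sqrt \<bar>P\<bar>" by simp
  ultimately have "0 < u" by linarith
  then show "0 < u \<and> \<bar>P\<bar> < u\<^sup>2"
    using \<open>sqrt \<bar>P\<bar> < u\<close> power_strict_mono[of "sqrt \<bar>P\<bar>" u 2] by simp
next
  assume "0 < u \<and> \<bar>P\<bar> < u\<^sup>2"
  then show "sqrt \<bar>P\<bar> < u"
    using real_sqrt_less_iff[of "\<bar>P\<bar>" "u\<^sup>2"] by simp
qed

lemma admissible_iff_sqrt_less: "admissible P omega \<longleftrightarrow> (\<forall>k\<ge>1. sqrt \<bar>P\<bar> < omega k)"
  unfolding admissible_def sqrt_abs_less_iff by blast

lemma zd_step_factor_bounds:
  fixes a s x y :: real
  assumes "0 \<le> s" "s < x" "s < y" "\<bar>a\<bar> \<le> s\<^sup>2"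
  shows "0 < 1 - s / y" "1 - s / y \<le> 1 + a / (x * y)" "1 + a / (x * y) \<le> 2"
proof -
  have xy: "0 < x" "0 < y" using assms by linarith+
  have "s / x \<le> 1" "0 \<le> s / x" "0 \<le> s / y" using assms xy by simp_all
  then have "s / x * (s / y) \<le> s / y" by (intro mult_left_le_one_le)
  moreover have "\<bar>a / (x * y)\<bar> \<le> s / x * (s / y)"
    using assms(4) xy by (simp add: abs_mult power2_eq_square divide_right_mono)
  moreover show "0 < 1 - s / y" using assms(3) xy by simp
  ultimately show "1 - s / y \<le> 1 + a / (x * y)" "1 + a / (x * y) \<le> 2" by linarith+
qed

lemma zd_step_diff_eq:
  assumes "zd_step a u x" "zd_step a v y" "u \<noteq> 0" "v \<noteq> 0" "x \<noteq> 0" "y \<noteq> 0"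
  shows "(x - y) * (1 + a / (x * y)) = (u - v) * (1 - a / (u * v))"
proof -
  have "(x - y) * (1 + a / (x * y)) = (x - a / x) - (y - a / y)"
    using assms(5,6) by (simp add: field_simps)
  also have "\<dots> = (u + a / u) - (v + a / v)"
  proof -
    have "x - a / x = u + a / u" if "zd_step a u x" "u \<noteq> 0" "x \<noteq> 0" for u x
      using that unfolding zd_step_def by (simp add: field_simps)
    then show ?thesis using assms by simp
  qed
  also have "\<dots> = (u - v) * (1 - a / (u * v))"
    using assms(3,4) by (simp add: field_simps)
  finally show ?thesis .
qed

lemma zd_step_sgn_diff:
  assumes "0 \<le> s" "s < u" "s < v" "s < x" "s < y" "\<bar>a\<bar> \<le> s\<^sup>2"
    and "zd_step a u x" "zd_step a v y"
  shows "sgn (x - y) = sgn (u - v)"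
proof -
  have "0 < 1 + a / (x * y)"
    using zd_step_factor_bounds(1,2)[of s x y a] assms by linarith
  moreover have "0 < 1 + (- a) / (u * v)"
    using zd_step_factor_bounds(1,2)[of s u v "- a"] assms by linarith
  moreover have "sgn ((x - y) * (1 + a / (x * y))) = sgn ((u - v) * (1 + (- a) / (u * v)))"
    using zd_step_diff_eq[OF assms(7,8)] assms(1-5) by simp
  ultimately show ?thesis by (simp add: sgn_mult)
qed

lemma zd_step_diff_bound:
  assumes "0 \<le> s" "s < u" "s < v" "s < x" "s < y" "\<bar>a\<bar> \<le> s\<^sup>2"
    and "zd_step a u x" "zd_step a v y"
  shows "\<bar>x - y\<bar> \<le> 2 * y / (y - s) * \<bar>u - v\<bar>"
proof -
  have lower: "0 < 1 - s / y" "1 - s / y \<le> 1 + a / (x * y)"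
    using zd_step_factor_bounds[of s x y a] assms by simp_all
  have "\<bar>- a\<bar> \<le> s\<^sup>2" using assms(6) by simp
  note factor = zd_step_factor_bounds[OF assms(1-3) this]
  have upper: "0 \<le> 1 + (- a) / (u * v)" "1 + (- a) / (u * v) \<le> 2"
    using factor by linarith+
  have "\<bar>x - y\<bar> * (1 - s / y) \<le> \<bar>x - y\<bar> * (1 + a / (x * y))"
    using lower by (intro mult_left_mono) simp_all
  also have "\<dots> = \<bar>(x - y) * (1 + a / (x * y))\<bar>"
    using lower by (simp add: abs_mult)
  also have "\<dots> = \<bar>(u - v) * (1 + (- a) / (u * v))\<bar>"
    using zd_step_diff_eq[OF assms(7,8)] assms(1-5) by simp
  also have "\<dots> = \<bar>u - v\<bar> * (1 + (- a) / (u * v))"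
    using upper by (simp add: abs_mult)
  also have "\<dots> \<le> \<bar>u - v\<bar> * 2"
    using upper by (intro mult_left_mono) simp_all
  finally have "\<bar>x - y\<bar> \<le> 2 * \<bar>u - v\<bar> / (1 - s / y)"
    using lower(1) by (simp add: pos_le_divide_eq mult.commute)
  also have "\<dots> = 2 * y / (y - s) * \<bar>u - v\<bar>"
    using assms(1,5) by (simp add: field_simps)
  finally show ?thesis .
qed

lemma zd_steps_sgn_diff_eq:
  fixes u v a :: "nat \<Rightarrow> real"
  assumes "0 \<le> s"
    and above: "\<And>k. lo \<le> k \<Longrightarrow> k \<le> hi \<Longrightarrow> s < u k \<and> s < v k"
    and steps: "\<And>k. lo \<le> k \<Longrightarrow> k < hi \<Longrightarrow>
      \<bar>a k\<bar> \<le> s\<^sup>2 \<and> zd_step (a k) (u k) (u (Suc k)) \<and> zd_step (a k) (v k) (v (Suc k))"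
    and "lo \<le> i" "i \<le> j" "j \<le> hi"
  shows "sgn (u j - v j) = sgn (u i - v i)"
  using \<open>i \<le> j\<close> \<open>j \<le> hi\<close>
proof (induction j rule: dec_induct)
  case (step k)
  then have "lo \<le> k" "k < hi" using \<open>lo \<le> i\<close> by linarith+
  then have "sgn (u (Suc k) - v (Suc k)) = sgn (u k - v k)"
    using above[of k] above[of "Suc k"] steps[of k]
    by (intro zd_step_sgn_diff[OF \<open>0 \<le> s\<close>]) auto
  with step show ?case by simp
qed simp

lemma two_sided_growth_bound:
  fixes D :: "nat \<Rightarrow> real"
  assumes growth: "\<And>j. lo \<le> j \<Longrightarrow> j < hi \<Longrightarrow> D (Suc j) \<le> L * D j \<and> D j \<le> L * D (Suc j)"
    and "1 \<le> L" "0 \<le> D i" "lo \<le> i" "i \<le> hi" "lo \<le> k" "k \<le> hi"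
  shows "D k \<le> L ^ (hi - lo) * D i"
proof -
  have forward: "D k \<le> L ^ (k - i) * D i" if "i \<le> k" "k \<le> hi" for k
    using that
  proof (induction k rule: dec_induct)
    case (step j)
    then have "D (Suc j) \<le> L * D j" using growth \<open>lo \<le> i\<close> by simp
    also have "\<dots> \<le> L * (L ^ (j - i) * D i)" using step \<open>1 \<le> L\<close> by simp
    finally show ?case using step.hyps by (simp add: Suc_diff_le)
  qed simp
  have backward: "D (i - n) \<le> L ^ n * D i" if "n \<le> i - lo" for n
    using that
  proof (induction n)
    case (Suc n)
    then have "Suc (i - Suc n) = i - n" by simp
    then have "D (i - Suc n) \<le> L * D (i - n)"
      using growth[of "i - Suc n"] Suc.prems \<open>i \<le> hi\<close> by auto
    also have "\<dots> \<le> L * (L ^ n * D i)" using Suc \<open>1 \<le> L\<close> by simp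
    finally show ?case by simp
  qed simp
  have "D k \<le> L ^ (if i \<le> k then k - i else i - k) * D i"
    using forward backward[of "i - k"] assms(6,7) by auto
  also have "\<dots> \<le> L ^ (hi - lo) * D i"
    using assms by (intro mult_right_mono power_increasing) auto
  finally show ?thesis .
qed

lemma zd_solutions_sgn_diff_eq:
  assumes "zd_solution P dth theta w" "zd_solution P dth theta omega"
    and "admissible P w" "admissible P omega" "1 \<le> i" "1 \<le> j"
  shows "sgn (w j - omega j) = sgn (w i - omega i)"
proof -
  have above: "sqrt \<bar>P\<bar> < w k \<and> sqrt \<bar>P\<bar> < omega k" if "1 \<le> k" for k
    using assms(3,4) that unfolding admissible_iff_sqrt_less by blast
  have steps: "\<bar>P * sin (theta k)\<bar> \<le> (sqrt \<bar>P\<bar>)\<^sup>2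
      \<and> zd_step (P * sin (theta k)) (w k) (w (Suc k))
      \<and> zd_step (P * sin (theta k)) (omega k) (omega (Suc k))" if "1 \<le> k" for k
    using abs_mult_sin_le zd_solution_step[OF assms(1) that] zd_solution_step[OF assms(2) that]
    by blast
  show ?thesis
  proof (cases "i \<le> j")
    case True
    show ?thesis
      by (rule zd_steps_sgn_diff_eq[of "sqrt \<bar>P\<bar>" 1 j w omega "\<lambda>k. P * sin (theta k)"])
        (use True above steps assms(5) in auto)
  next
    case False
    show ?thesis
      by (rule zd_steps_sgn_diff_eq[of "sqrt \<bar>P\<bar>" 1 i w omega "\<lambda>k. P * sin (theta k)", symmetric])
        (use False above steps assms(6) in auto)
  qed
qed

lemma zd_solution_reflection:
  fixes w theta :: "nat \<Rightarrow> real"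
  assumes sol: "zd_solution P dth theta w" and adm: "admissible P w"
    and anti: "\<And>k. 1 \<le> k \<Longrightarrow> k + 1 < c \<Longrightarrow> sin (theta (c - 1 - k)) = - sin (theta k)"
    and "1 \<le> k" "k < c"
  shows "w (c - k) = w k"
proof -
  define v where "v k = w (c - k)" for k
  define a where "a k = P * sin (theta k)" for k
  have above: "sqrt \<bar>P\<bar> < w k \<and> sqrt \<bar>P\<bar> < v k" if "1 \<le> k" "k \<le> c - 1" for k
    using adm that unfolding admissible_iff_sqrt_less v_def by auto
  have steps: "\<bar>a k\<bar> \<le> (sqrt \<bar>P\<bar>)\<^sup>2 \<and> zd_step (a k) (w k) (w (Suc k))
      \<and> zd_step (a k) (v k) (v (Suc k))" if "1 \<le> k" "k < c - 1" for k
  proof -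
    define j where "j = c - 1 - k"
    have j: "1 \<le> j" "Suc j = c - k" "c - Suc k = j" using that by (auto simp: j_def)
    have "a j = - a k" using anti[of k] that unfolding a_def j_def by simp
    then have "zd_step (a k) (v k) (v (Suc k))"
      using zd_solution_step[OF sol j(1)] zd_step_reverse[of "a k"] j unfolding a_def v_def by simp
    then show ?thesis using abs_mult_sin_le zd_solution_step[OF sol that(1)] unfolding a_def by blast
  qed
  \<comment> \<open>w and its reflection v meet in the middle: for odd c = 2p + 1, sin (theta p) = 0 forces a
    zero step.\<close>
  obtain p where p: "1 \<le> p" "p \<le> c - 1" "w p = v p"
  proof (cases "even c")
    case True
    then show ?thesis using that[of "c div 2"] assms(4,5) unfolding v_def by (auto elim!: evenE)
  next
    case False
    then obtain p where c: "c = 2 * p + 1" by (auto elim!: oddE)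
    then have "1 \<le> p" using assms(4,5) by simp
    moreover have "sin (theta p) = 0" using anti[of p] c \<open>1 \<le> p\<close> by simp
    then have "w (Suc p) = w p"
      using zd_solution_step[OF sol \<open>1 \<le> p\<close>] unfolding zd_step_def by simp
    ultimately show ?thesis using that[of p] c unfolding v_def by simp
  qed
  have "sgn (w k - v k) = 0"
  proof (cases "p \<le> k")
    case True
    then show ?thesis
      using zd_steps_sgn_diff_eq[of "sqrt \<bar>P\<bar>" 1 "c - 1" w v a p k] above steps p assms(5) by simp
  next
    case False
    then show ?thesis
      using zd_steps_sgn_diff_eq[of "sqrt \<bar>P\<bar>" 1 "c - 1" w v a k p] above steps p assms(4) by simp
  qed
  then show ?thesis unfolding v_def by (simp add: sgn_0_0)
qed

lemma zd_solution_theta: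
  assumes "zd_solution P dth theta w" "1 \<le> k"
  shows "theta k = theta 1 + (real k - 1) * dth"
  using assms(2)
proof (induction k rule: dec_induct)
  case (step k)
  then have "theta (Suc k) = theta k + dth" using assms(1) unfolding zd_solution_def by simp
  with step.IH show ?case by (simp add: algebra_simps)
qed simp

lemma zd_reflection_centre_exists:
  assumes sol: "zd_solution P dth theta w"
    and sym: "\<exists>k0\<ge>1. \<exists>m::int. theta k0 = 2 * pi * real_of_int m
                              \<or> theta k0 = dth / 2 + 2 * pi * real_of_int m"
  obtains b :: nat and m :: int where "2 * theta 1 + (real b - 3) * dth = 2 * pi * real_of_int m"
proof -
  obtain k0 m where k0: "1 \<le> k0" and m: "theta k0 = 2 * pi * real_of_int m
      \<or> theta k0 = dth / 2 + 2 * pi * real_of_int m" using sym by blast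
  have theta1: "theta 1 = theta k0 - (real k0 - 1) * dth"
    using zd_solution_theta[OF sol k0] by simp
  from m show thesis
  proof
    assume "theta k0 = 2 * pi * real_of_int m"
    then have "2 * theta 1 + (real (2 * k0 + 1) - 3) * dth = 2 * pi * real_of_int (2 * m)"
      using theta1 by (simp add: algebra_simps)
    then show thesis by (rule that)
  next
    assume "theta k0 = dth / 2 + 2 * pi * real_of_int m"
    then have "2 * theta 1 + (real (2 * k0) - 3) * dth = 2 * pi * real_of_int (2 * m)"
      using theta1 by (simp add: algebra_simps)
    then show thesis by (rule that)
  qed
qed

lemma zd_solution_sin_reflection:
  assumes sol: "zd_solution P (2 * pi / real N) theta w" and "1 \<le> N"
    and centre: "2 * theta 1 + (real b - 3) * (2 * pi / real N) = 2 * pi * real_of_int m"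
    and "1 \<le> k" "k + 1 < b + j * N"
  shows "sin (theta (b + j * N - 1 - k)) = - sin (theta k)"
proof -
  define c where "c = b + j * N"
  define d where "d = 2 * pi / real N"
  have "1 \<le> c - 1 - k" and real_diff: "real (c - 1 - k) = real c - 1 - real k"
    using assms(5) unfolding c_def by (simp_all add: of_nat_diff)
  then have "theta k + theta (c - 1 - k) = 2 * theta 1 + (real c - 3) * d"
    using zd_solution_theta[OF sol[folded d_def] \<open>1 \<le> k\<close>]
      zd_solution_theta[OF sol[folded d_def] \<open>1 \<le> c - 1 - k\<close>]
    unfolding real_diff by (simp add: algebra_simps)
  also have "\<dots> = 2 * pi * real_of_int (m + int j)"
    using centre \<open>1 \<le> N\<close> unfolding c_def d_def by (simp add: field_simps)
  finally have "theta (c - 1 - k) = 2 * pi * real_of_int (m + int j) - theta k" by simp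
  then show ?thesis
    unfolding c_def by (simp only: sin_diff sin_int_2pin cos_int_2pin)
qed

lemma zd_solution_periodic:
  assumes sol: "zd_solution P (2 * pi / real N) theta w" and adm: "admissible P w" and "1 \<le> N"
    and centre: "2 * theta 1 + (real b - 3) * (2 * pi / real N) = 2 * pi * real_of_int m"
  shows "periodic_seq N w"
  unfolding periodic_seq_def
proof (intro allI impI)
  fix k :: nat assume "1 \<le> k"
  have reflect: "w (b + j * N - i) = w i" if "1 \<le> i" "i < b + j * N" for i j
    using zd_solution_reflection[OF sol adm zd_solution_sin_reflection[OF sol \<open>1 \<le> N\<close> centre]]
      that by blast
  have "k \<le> k * N" using \<open>1 \<le> N\<close> by simp
  then have "k + N < b + (k + 2) * N" using \<open>1 \<le> N\<close> unfolding distrib_right by linarith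
  then have "w (b + (k + 3) * N - (k + N)) = w (k + N)" "w (b + (k + 2) * N - k) = w k"
    using reflect[of "k + N" "k + 3"] reflect[of k "k + 2"] \<open>1 \<le> k\<close> by (simp_all add: algebra_simps)
  moreover have "b + (k + 3) * N - (k + N) = b + (k + 2) * N - k"
    by (simp add: algebra_simps)
  ultimately show "w (k + N) = w k" by simp
qed

lemma periodic_seq_add_mult:
  assumes "periodic_seq N w" "1 \<le> k"
  shows "w (k + q * N) = w k"
proof (induction q)
  case (Suc q)
  have "w (k + Suc q * N) = w ((k + q * N) + N)" by (simp add: algebra_simps)
  also have "\<dots> = w (k + q * N)" using assms unfolding periodic_seq_def by simp
  finally show ?case using Suc by simp
qed simp

lemma periodic_seq_mod:
  assumes "periodic_seq N w" "1 \<le> k"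
  shows "w k = w ((k - 1) mod N + 1)"
proof -
  have "k = ((k - 1) mod N + 1) + ((k - 1) div N) * N"
    using assms(2) by simp
  then show ?thesis
    using periodic_seq_add_mult[OF assms(1), of "(k - 1) mod N + 1" "(k - 1) div N"] by simp
qed

lemma zd_solution_diff_bound_on_interval:
  assumes sol: "zd_solution P dth theta omega" and adm: "admissible P omega" and "1 \<le> k1" "k1 \<le> M"
  obtains L :: real where "0 < L"
    "\<And>w k. zd_solution P dth theta w \<Longrightarrow> admissible P w \<Longrightarrow> 1 \<le> k \<Longrightarrow> k \<le> M \<Longrightarrow>
      \<bar>w k - omega k\<bar> \<le> L * \<bar>w k1 - omega k1\<bar>"
proof -
  define s where "s = sqrt \<bar>P\<bar>"
  define K where "K j = 2 * omega j / (omega j - s)" for j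
  define Lip where "Lip = Max (insert 1 (K ` {1..M}))"
  have Lip: "1 \<le> Lip" "\<And>j. 1 \<le> j \<Longrightarrow> j \<le> M \<Longrightarrow> K j \<le> Lip"
    unfolding Lip_def by (simp, intro max.coboundedI2 Max_ge) auto
  show thesis
  proof (rule that)
    show "0 < Lip ^ (M - 1)" using Lip(1) by simp
    fix w k
    assume sol_w: "zd_solution P dth theta w" and adm_w: "admissible P w" and "1 \<le> k" "k \<le> M"
    define D where "D j = \<bar>w j - omega j\<bar>" for j
    have "D (Suc j) \<le> Lip * D j \<and> D j \<le> Lip * D (Suc j)" if "1 \<le> j" "j < M" for j
    proof -
      define a where "a = P * sin (theta j)"
      have above: "s < w j" "s < omega j" "s < w (Suc j)" "s < omega (Suc j)"
        using adm adm_w that unfolding admissible_iff_sqrt_less s_def by auto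
      have "\<bar>a\<bar> \<le> s\<^sup>2" "\<bar>- a\<bar> \<le> s\<^sup>2" unfolding a_def s_def using abs_mult_sin_le by simp_all
      moreover have "zd_step a (w j) (w (Suc j))" "zd_step a (omega j) (omega (Suc j))"
        using zd_solution_step[OF sol_w \<open>1 \<le> j\<close>] zd_solution_step[OF sol \<open>1 \<le> j\<close>]
        unfolding a_def by simp_all
      moreover have "0 \<le> s" unfolding s_def by simp
      ultimately have "D (Suc j) \<le> K (Suc j) * D j" "D j \<le> K j * D (Suc j)"
        using zd_step_diff_bound[of s "w j" "omega j" "w (Suc j)" "omega (Suc j)" a]
          zd_step_diff_bound[of s "w (Suc j)" "omega (Suc j)" "w j" "omega j" "- a"]
          above zd_step_reverse unfolding D_def K_def by simp_all
      moreover have "K (Suc j) \<le> Lip" "K j \<le> Lip" using Lip(2) that by simp_all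
      ultimately show ?thesis
        unfolding D_def by (meson abs_ge_zero mult_right_mono order_trans)
    qed
    then show "\<bar>w k - omega k\<bar> \<le> Lip ^ (M - 1) * \<bar>w k1 - omega k1\<bar>"
      using two_sided_growth_bound[of 1 M D Lip k1 k] Lip(1) assms(3,4) \<open>1 \<le> k\<close> \<open>k \<le> M\<close>
      unfolding D_def by simp
  qed
qed

lemma zd_periodic_solution_diff_bound:
  assumes sol: "zd_solution P dth theta omega" and adm: "admissible P omega"
    and per: "periodic_seq N omega" and "1 \<le> N" "1 \<le> k1"
  obtains L :: real where "0 < L"
    "\<And>w k. zd_solution P dth theta w \<Longrightarrow> admissible P w \<Longrightarrow> periodic_seq N w \<Longrightarrow> 1 \<le> k \<Longrightarrow>
      \<bar>w k - omega k\<bar> \<le> L * \<bar>w k1 - omega k1\<bar>"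
proof -
  obtain L where "0 < L" and bound: "\<And>w k. zd_solution P dth theta w \<Longrightarrow> admissible P w \<Longrightarrow>
      1 \<le> k \<Longrightarrow> k \<le> max k1 N \<Longrightarrow> \<bar>w k - omega k\<bar> \<le> L * \<bar>w k1 - omega k1\<bar>"
    using zd_solution_diff_bound_on_interval[OF sol adm \<open>1 \<le> k1\<close>, of "max k1 N"] by auto
  show thesis
  proof (rule that[OF \<open>0 < L\<close>])
    fix w and k :: nat
    assume sol_w: "zd_solution P dth theta w" and adm_w: "admissible P w"
      and per_w: "periodic_seq N w" and "1 \<le> k"
    have "(k - 1) mod N + 1 \<le> max k1 N"
      using \<open>1 \<le> N\<close> by (simp add: Suc_leI le_max_iff_disj)
    then show "\<bar>w k - omega k\<bar> \<le> L * \<bar>w k1 - omega k1\<bar>"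
      using bound[OF sol_w adm_w, of "(k - 1) mod N + 1"]
        periodic_seq_mod[OF per \<open>1 \<le> k\<close>] periodic_seq_mod[OF per_w \<open>1 \<le> k\<close>]
      by simp
  qed
qed

theorem corollary1:
  fixes N :: nat and P :: real and theta omega :: "nat \<Rightarrow> real"
  assumes N3: "N \<ge> 3"
    and P0: "P \<noteq> 0"
    and sol: "zd_solution P (2 * pi / real N) theta omega"
    and adm: "admissible P omega"
    and sym: "\<exists>k0\<ge>1. \<exists>m::int. theta k0 = 2 * pi * real_of_int m
                              \<or> theta k0 = (2 * pi / real N) / 2 + 2 * pi * real_of_int m"
  shows "periodic_seq N omega
    \<and> (\<forall>k1 \<ge> 1. \<forall>\<epsilon> omega'. \<epsilon> \<noteq> 0 \<and> omega' k1 = omega k1 + \<epsilon>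
          \<and> zd_solution P (2 * pi / real N) theta omega' \<and> admissible P omega'
          \<longrightarrow> periodic_seq N omega' \<and> (\<forall>k\<ge>1. omega' k \<noteq> omega k))
    \<and> (\<forall>k1 \<ge> 1. \<forall>e > 0. \<exists>\<delta> > 0. \<forall>\<epsilon> omega'.
          \<epsilon> \<noteq> 0 \<and> \<bar>\<epsilon>\<bar> < \<delta> \<and> omega' k1 = omega k1 + \<epsilon>
          \<and> zd_solution P (2 * pi / real N) theta omega' \<and> admissible P omega'
          \<longrightarrow> (\<forall>k\<ge>1. \<bar>omega' k - omega k\<bar> \<le> e))"
proof -
  have "1 \<le> N" using N3 by simp
  obtain b m where centre: "2 * theta 1 + (real b - 3) * (2 * pi / real N) = 2 * pi * real_of_int m"
    using zd_reflection_centre_exists[OF sol] sym by auto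
  have per: "periodic_seq N w"
    if "zd_solution P (2 * pi / real N) theta w" "admissible P w" for w
    using zd_solution_periodic[OF that \<open>1 \<le> N\<close> centre] .
  have apart: "w k \<noteq> omega k"
    if "\<epsilon> \<noteq> 0" "w k1 = omega k1 + \<epsilon>" "zd_solution P (2 * pi / real N) theta w"
      "admissible P w" "1 \<le> k1" "1 \<le> k" for \<epsilon> w k1 k
    using zd_solutions_sgn_diff_eq[OF that(3) sol that(4) adm that(5,6)] that(1,2)
    by (auto simp: sgn_0_0)
  have stable: "\<exists>\<delta> > 0. \<forall>\<epsilon> w. \<epsilon> \<noteq> 0 \<and> \<bar>\<epsilon>\<bar> < \<delta> \<and> w k1 = omega k1 + \<epsilon>
      \<and> zd_solution P (2 * pi / real N) theta w \<and> admissible P w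
      \<longrightarrow> (\<forall>k\<ge>1. \<bar>w k - omega k\<bar> \<le> e)" if "1 \<le> k1" "0 < e" for k1 e
  proof -
    obtain L where "0 < L" and bound: "\<And>w k. zd_solution P (2 * pi / real N) theta w \<Longrightarrow>
        admissible P w \<Longrightarrow> periodic_seq N w \<Longrightarrow> 1 \<le> k \<Longrightarrow>
        \<bar>w k - omega k\<bar> \<le> L * \<bar>w k1 - omega k1\<bar>"
      using zd_periodic_solution_diff_bound[OF sol adm per[OF sol adm] \<open>1 \<le> N\<close> \<open>1 \<le> k1\<close>] by blast
    have "\<bar>w k - omega k\<bar> \<le> e"
      if "\<bar>\<epsilon>\<bar> < e / L" "w k1 = omega k1 + \<epsilon>" "zd_solution P (2 * pi / real N) theta w"
        "admissible P w" "1 \<le> k" for \<epsilon> w k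
      using bound[OF that(3,4) per[OF that(3,4)] that(5)] that(1,2) \<open>0 < L\<close>
      by (simp add: pos_less_divide_eq mult.commute)
    then show ?thesis using \<open>0 < e\<close> \<open>0 < L\<close> by (intro exI[of _ "e / L"]) auto
  qed
  show ?thesis using per[OF sol adm] per apart stable by blast
qed

end
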